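(* Let $R$ be a commutative ring with identity, $C=(c_{ij})_{i,j=1}^n$ a matrix with entries in $R$, and $E$ the $n\times n$ matrix all of whose entries are $1$. Then $$\det(E-C)=\det(-C)+\sum_{\vec G}(-1)^{\#(\text{cycles of }\vec G)}\prod_{ij\in E(\vec G)}c_{ij},$$ where the sum runs over all directed graphs $\vec G$ on the vertex set $\{1,\ldots,n\}$ in which one connected component is a directed path (possibly of length $0$, i.e. an isolated vertex) and all other connected components are directed cycles (possibly of length $1$, i.e. a loop $ii$).
   Context: In a directed graph, $ij\in E(\vec G)$ denotes a directed edge from $i$ to $j$ (a loop $ii$ contributes $c_{ii}$). Every vertex of $\{1,\ldots,n\}$ belongs to exactly one component of $\vec G$. *)

theory Defs
  imports "HOL-Analysis.Analysis"
begin

text \<open>A directed graph on the (finite) vertex type 'v is a set of directed edges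
  (pairs (i,j) meaning an edge from i to j; loops (i,i) allowed).\<close>

definition wconn :: "('v \<times> 'v) set \<Rightarrow> ('v \<times> 'v) set" where
  "wconn E = (E \<union> E\<inverse>)\<^sup>*"

definition components :: "('v \<times> 'v) set \<Rightarrow> 'v set set" where
  "components E = {wconn E `` {x} | x. True}"

definition is_dpath_comp :: "('v \<times> 'v) set \<Rightarrow> 'v set \<Rightarrow> bool" where
  "is_dpath_comp E S \<longleftrightarrow> (\<exists>vs. vs \<noteq> [] \<and> distinct vs \<and> set vs = S \<and>
     E \<inter> (S \<times> S) = {(vs ! i, vs ! (i+1)) | i. i + 1 < length vs})"

definition is_dcycle_comp :: "('v \<times> 'v) set \<Rightarrow> 'v set \<Rightarrow> bool" where
  "is_dcycle_comp E S \<longleftrightarrow> (\<exists>vs. vs \<noteq> [] \<and> distinct vs \<and> set vs = S \<and>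
     E \<inter> (S \<times> S) = {(vs ! i, vs ! ((i+1) mod length vs)) | i. i < length vs})"

definition path_cycle_graphs :: "('v::finite \<times> 'v) set set" where
  "path_cycle_graphs = {E. (\<exists>!S. S \<in> components E \<and> is_dpath_comp E S) \<and>
     (\<forall>S \<in> components E. is_dpath_comp E S \<or> is_dcycle_comp E S)}"

definition num_cycles :: "('v \<times> 'v) set \<Rightarrow> nat" where
  "num_cycles E = card {S \<in> components E. is_dcycle_comp E S}"

end

theory Submission
  imports Defs "HOL-Combinatorics.Cycles" "HOL-Combinatorics.Orbits"
begin

text \<open>
  Write E - C row by row as (1, ..., 1) + (-C)_i and expand the determinant multilinearly in the rows.
  Every term with two rows equal to (1, ..., 1) vanishes, so det (E - C) = det (-C) + sum_k det C_k,
  where C_k is -C with row k replaced by ones, and by the Leibniz formula det C_k is the sum over all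
  permutations sigma of sign sigma * (-1)^(n - 1) * prod_{i ~= k} c_{i, sigma i}.

  The pair (k, sigma) is encoded by the graph {(i, sigma i) | i ~= k}: deleting the edge leaving k from
  the functional graph of sigma turns the orbit of k into a directed path from sigma k to k and leaves
  every other orbit a directed cycle.  This is a bijection onto the path-cycle graphs, and the edge
  product of the graph is prod_{i ~= k} c_{i, sigma i}.  Finally sign sigma = (-1)^(n - #orbits) and
  #orbits = #cycles + 1 turn the sign into (-1)^#cycles.
\<close>

section \<open>Sign of a permutation and its orbits\<close>

lemma orbit_eq_if_mem:
  assumes "permutation p" "y \<in> orbit p x"
  shows "orbit p y = orbit p x"
  using orbit_cyclic_eq3[OF cyclic_on_orbit'[OF assms(1)] assms(2)] .

lemma set_support_eq_orbit:
  assumes "permutation p"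
  shows "set (support p x) = orbit p x"
  unfolding support_set[OF assms] orbit_altdef_permutation[OF assms] by auto

lemma sign_cycle_of_list:
  assumes "distinct cs"
  shows "sign (cycle_of_list cs) = (-1) ^ (length cs - 1)"
  using assms
proof (induction cs rule: cycle_of_list.induct)
  case (1 i j cs)
  have "sign (cycle_of_list (i # j # cs)) = sign (Transposition.transpose i j) * sign (cycle_of_list (j # cs))"
    unfolding cycle_of_list.simps by (rule sign_compose[OF permutation_swap_id permutation_of_cycle])
  with 1 show ?case by (simp add: sign_swap_id del: cycle_of_list.simps)
qed simp_all

lemma perm_restrict_orbit:
  assumes "permutation p"
  shows "perm_restrict p (orbit p x) = cycle_of_list (support p x)"
proof
  fix y
  show "perm_restrict p (orbit p x) y = cycle_of_list (support p x) y"
    by (metis perm_restrict_simps cycle_restrict[OF assms] id_outside_supp set_support_eq_orbit[OF assms])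
qed

lemma sign_perm_restrict_orbit:
  assumes "permutation p"
  shows "- sign (perm_restrict p (orbit p x)) = (-1) ^ card (orbit p x)"
proof -
  have "distinct (support p x)"
    by (rule cycle_of_permutation[OF assms])
  then have "sign (perm_restrict p (orbit p x)) = (-1) ^ (card (orbit p x) - 1)"
    using sign_cycle_of_list distinct_card set_support_eq_orbit[OF assms]
    by (metis perm_restrict_orbit[OF assms])
  moreover have "card (orbit p x) > 0"
    using finite_orbit[OF permutation_self_in_orbit[OF assms]] orbit_nonempty by (simp add: card_gt_0_iff)
  ultimately show ?thesis
    by (cases "card (orbit p x)") simp_all
qed

lemma sign_perm_restrict_split:
  assumes "p permutes S" "finite S" "s \<in> S"
  shows "sign p = sign (perm_restrict p (S - orbit p s)) * sign (perm_restrict p (orbit p s))"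
proof -
  let ?A = "orbit p s"
  have perm: "permutation p"
    using assms(1,2) by (auto simp: permutation_permutes)
  have cyclic: "cyclic_on p ?A"
    by (rule cyclic_on_orbit'[OF perm])
  have "?A \<subseteq> S"
    by (rule permutes_orbit_subset[OF assms(1,3)])
  then have "p = perm_restrict p (S - ?A) \<circ> perm_restrict p ?A"
    using perm_restrict_comp[OF _ cyclic, of "S - ?A"] perm_restrict_id[OF assms(1)]
    by (simp add: Diff_disjoint Int_commute Un_absorb2)
  moreover have "permutation (perm_restrict p (S - ?A))"
    using perm_restrict_diff_cyclic[OF assms(1) cyclic] finite_Diff[OF assms(2)]
    unfolding permutation_permutes by blast
  moreover have "permutation (perm_restrict p ?A)"
    unfolding perm_restrict_orbit[OF perm] by (rule permutation_of_cycle)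
  ultimately show ?thesis
    by (metis sign_compose)
qed

lemma card_orbits_perm_restrict_split:
  assumes "p permutes S" "finite S" "s \<in> S"
  shows "card (orbit p ` S) = Suc (card (orbit (perm_restrict p (S - orbit p s)) ` (S - orbit p s)))"
proof -
  let ?A = "orbit p s" and ?q = "perm_restrict p (S - orbit p s)"
  have perm: "permutation p"
    using assms(1,2) by (auto simp: permutation_permutes)
  have q: "?q permutes S - ?A"
    by (rule perm_restrict_diff_cyclic[OF assms(1) cyclic_on_orbit'[OF perm]])
  have "orbit ?q x = orbit p x" if "x \<in> S - ?A" for x
  proof (rule orbit_cong0[OF that])
    show "?q \<in> S - ?A \<rightarrow> S - ?A"
      using permutes_in_image[OF q] by (simp add: Pi_iff)
  qed (simp add: perm_restrict_simps)
  then have "orbit ?q ` (S - ?A) = orbit p ` (S - ?A)"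
    by simp
  moreover have "orbit p ` ?A = {?A}"
    using permutation_self_in_orbit[OF perm, of s] orbit_eq_if_mem[OF perm] by blast
  moreover have "S = ?A \<union> (S - ?A)"
    using permutes_orbit_subset[OF assms(1,3)] by blast
  ultimately have "orbit p ` S = insert ?A (orbit ?q ` (S - ?A))"
    by (metis image_Un insert_is_Un)
  moreover have "?A \<notin> orbit ?q ` (S - ?A)"
    using permutation_self_in_orbit[OF perm] \<open>orbit ?q ` (S - ?A) = orbit p ` (S - ?A)\<close> by auto
  ultimately show ?thesis
    using assms(2) by simp
qed

text \<open>The classical sign p = (-1)^(card S - #orbits), stated without truncated subtraction.\<close>

lemma sign_permutes_orbits:
  assumes "p permutes S" "finite S"
  shows "sign p * (-1) ^ card (orbit p ` S) = (-1) ^ card S"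
  using assms(2,1)
proof (induction arbitrary: p rule: finite_psubset_induct)
  case (psubset S)
  show ?case
  proof (cases "S = {}")
    case True
    with psubset.prems show ?thesis
      by (simp add: permutes_empty)
  next
    case False
    then obtain s where "s \<in> S"
      by blast
    let ?A = "orbit p s" and ?q = "perm_restrict p (S - orbit p s)"
    have perm: "permutation p"
      using psubset by (auto simp: permutation_permutes)
    have "?A \<subseteq> S" "s \<in> ?A"
      using permutes_orbit_subset[OF psubset.prems \<open>s \<in> S\<close>] permutation_self_in_orbit[OF perm] by auto
    then have "S - ?A \<subset> S"
      using \<open>s \<in> S\<close> by blast
    moreover have "?q permutes S - ?A"
      by (rule perm_restrict_diff_cyclic[OF psubset.prems cyclic_on_orbit'[OF perm]])
    ultimately have IH: "sign ?q * (-1) ^ card (orbit ?q ` (S - ?A)) = (-1) ^ card (S - ?A)"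
      using psubset.IH by blast
    have card_S: "card S = card (S - ?A) + card ?A"
      using card_Diff_subset[OF finite_subset[OF \<open>?A \<subseteq> S\<close>]] card_mono[OF _ \<open>?A \<subseteq> S\<close>]
        psubset.hyps(1) \<open>?A \<subseteq> S\<close> by fastforce
    have "sign p * (-1) ^ card (orbit p ` S) =
        (sign ?q * (-1) ^ card (orbit ?q ` (S - ?A))) * - sign (perm_restrict p ?A)"
      unfolding sign_perm_restrict_split[OF psubset.prems psubset.hyps(1) \<open>s \<in> S\<close>]
        card_orbits_perm_restrict_split[OF psubset.prems psubset.hyps(1) \<open>s \<in> S\<close>]
      by simp
    also have "\<dots> = (-1) ^ card S"
      unfolding IH sign_perm_restrict_orbit[OF perm] card_S by (simp add: power_add)
    finally show ?thesis .
  qed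
qed

section \<open>Components, directed paths and directed cycles\<close>

lemma cycle_of_list_nth:
  assumes "distinct cs" "i < length cs"
  shows "cycle_of_list cs (cs ! i) = cs ! (Suc i mod length cs)"
proof -
  have "map (cycle_of_list cs) cs = rotate1 cs"
    using cyclic_rotation[OF assms(1), of 1] by simp
  then show ?thesis
    using assms(2) by (metis nth_map nth_rotate1)
qed

lemma set_nth_image: "set vs = (!) vs ` {..<length vs}"
  by (auto simp: in_set_conv_nth)

lemma dcycle_edges_eq:
  assumes "distinct vs"
  shows "{(vs ! i, vs ! ((i + 1) mod length vs)) | i. i < length vs} =
    (\<lambda>v. (v, cycle_of_list vs v)) ` set vs"
proof -
  have "{(vs ! i, vs ! ((i + 1) mod length vs)) | i. i < length vs} =
      (\<lambda>i. (vs ! i, cycle_of_list vs (vs ! i))) ` {..<length vs}"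
    using cycle_of_list_nth[OF assms] by auto
  then show ?thesis
    by (simp add: set_nth_image image_image)
qed

lemma dpath_edges_eq:
  assumes "distinct vs" "vs \<noteq> []"
  shows "{(vs ! i, vs ! (i + 1)) | i. i + 1 < length vs} =
    (\<lambda>v. (v, cycle_of_list vs v)) ` (set vs - {last vs})"
proof -
  have "set vs - {last vs} = set (butlast vs)"
    using assms by (induction vs rule: rev_induct) auto
  also have "\<dots> = (!) vs ` {..<length vs - 1}"
    by (simp add: set_nth_image nth_butlast)
  finally have "set vs - {last vs} = (!) vs ` {..<length vs - 1}" .
  moreover have "{(vs ! i, vs ! (i + 1)) | i. i + 1 < length vs} =
      (\<lambda>i. (vs ! i, cycle_of_list vs (vs ! i))) ` {..<length vs - 1}"
    using cycle_of_list_nth[OF assms(1)] by force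
  ultimately show ?thesis
    by (simp add: image_image)
qed

text \<open>
  Both kinds of component are described by the successor map cycle_of_list vs of an enumeration vs
  of the component; a path is such a cycle with the edge leaving last vs removed.
\<close>

lemma is_dcycle_comp_iff:
  "is_dcycle_comp E S \<longleftrightarrow> (\<exists>vs. vs \<noteq> [] \<and> distinct vs \<and> set vs = S \<and>
     E \<inter> S \<times> S = (\<lambda>v. (v, cycle_of_list vs v)) ` S)"
  unfolding is_dcycle_comp_def
proof (intro ex_cong1 conj_cong refl)
  fix vs
  assume "distinct vs" "set vs = S"
  then show "E \<inter> S \<times> S = {(vs ! i, vs ! ((i + 1) mod length vs)) | i. i < length vs} \<longleftrightarrow>
      E \<inter> S \<times> S = (\<lambda>v. (v, cycle_of_list vs v)) ` S"
    by (simp only: dcycle_edges_eq)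
qed

lemma is_dpath_comp_iff:
  "is_dpath_comp E S \<longleftrightarrow> (\<exists>vs. vs \<noteq> [] \<and> distinct vs \<and> set vs = S \<and>
     E \<inter> S \<times> S = (\<lambda>v. (v, cycle_of_list vs v)) ` (S - {last vs}))"
  unfolding is_dpath_comp_def
proof (intro ex_cong1 conj_cong refl)
  fix vs
  assume "vs \<noteq> []" "distinct vs" "set vs = S"
  show "E \<inter> S \<times> S = {(vs ! i, vs ! (i + 1)) | i. i + 1 < length vs} \<longleftrightarrow>
      E \<inter> S \<times> S = (\<lambda>v. (v, cycle_of_list vs v)) ` (S - {last vs})"
    by (simp only: dpath_edges_eq[OF \<open>distinct vs\<close> \<open>vs \<noteq> []\<close>] \<open>set vs = S\<close>)
qed

lemma not_dpath_and_dcycle_comp: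
  assumes "is_dpath_comp E S"
  shows "\<not> is_dcycle_comp E S"
proof
  obtain ws where "ws \<noteq> []" "set ws = S"
    "E \<inter> S \<times> S = (\<lambda>v. (v, cycle_of_list ws v)) ` (S - {last ws})"
    using assms unfolding is_dpath_comp_iff by blast
  then have path: "card (E \<inter> S \<times> S) = card S - 1" and "card S > 0"
    by (auto simp: card_image[OF inj_on_convol_ident] card_gt_0_iff)
  assume "is_dcycle_comp E S"
  then obtain vs where "E \<inter> S \<times> S = (\<lambda>v. (v, cycle_of_list vs v)) ` S"
    unfolding is_dcycle_comp_iff by blast
  then have "card (E \<inter> S \<times> S) = card S"
    by (simp add: card_image[OF inj_on_convol_ident])
  with path \<open>card S > 0\<close> show False
    by linarith
qed

lemma equiv_wconn: "equiv UNIV (wconn E)"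
proof -
  have "sym (E \<union> E\<inverse>)"
    by (rule sym_Un_converse)
  then show ?thesis
    unfolding wconn_def by (simp add: equiv_def refl_rtrancl sym_rtrancl trans_rtrancl)
qed

lemma wconn_sym: "(x, y) \<in> wconn E \<Longrightarrow> (y, x) \<in> wconn E"
  using equiv_wconn[of E] unfolding equiv_def by (blast dest: symD)

lemma wconn_trans: "(x, y) \<in> wconn E \<Longrightarrow> (y, z) \<in> wconn E \<Longrightarrow> (x, z) \<in> wconn E"
  unfolding wconn_def by (rule rtrancl_trans)

lemma components_eq_quotient: "components E = UNIV // wconn E"
  unfolding components_def quotient_def by auto

section \<open>Permutations with one deleted edge\<close>

definition perm_graph_del :: "'v \<Rightarrow> ('v \<Rightarrow> 'v) \<Rightarrow> ('v \<times> 'v) set" where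
  "perm_graph_del k \<sigma> = (\<lambda>i. (i, \<sigma> i)) ` (- {k})"

lemma perm_graph_del_iff: "(a, b) \<in> perm_graph_del k \<sigma> \<longleftrightarrow> a \<noteq> k \<and> b = \<sigma> a"
  unfolding perm_graph_del_def by auto

lemma wconn_perm_graph_del_step:
  assumes "permutation \<sigma>"
  shows "(x, \<sigma> x) \<in> wconn (perm_graph_del k \<sigma>)"
proof (cases "x = k")
  case False
  then show ?thesis
    unfolding wconn_def by (auto simp: perm_graph_del_iff)
next
  case True
  \<comment> \<open>k has no outgoing edge, but the path from \<sigma> k along the orbit ends in k\<close>
  define d where "d = funpow_dist \<sigma> (\<sigma> k) k"
  have reach: "(\<sigma> k, (\<sigma> ^^ m) (\<sigma> k)) \<in> (perm_graph_del k \<sigma>)\<^sup>*" if "m \<le> d" for m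
    using that
  proof (induction m)
    case (Suc m)
    then have "(\<sigma> ^^ m) (\<sigma> k) \<noteq> k"
      unfolding d_def by (intro funpow_dist_least) simp
    with Suc show ?case
      by (auto intro: rtrancl_into_rtrancl simp: perm_graph_del_iff)
  qed simp
  have "k \<in> orbit \<sigma> (\<sigma> k)"
    using permutation_self_in_orbit[OF assms, of k] by (simp add: permutation_orbit_step[OF assms])
  then have "(\<sigma> ^^ d) (\<sigma> k) = k"
    unfolding d_def by (rule funpow_dist_prop)
  with reach[OF order_refl] have "(\<sigma> k, k) \<in> (perm_graph_del k \<sigma>)\<^sup>*"
    by simp
  then have "(\<sigma> k, k) \<in> wconn (perm_graph_del k \<sigma>)"
    unfolding wconn_def by (intro in_rtrancl_UnI disjI1)
  then have "(k, \<sigma> k) \<in> wconn (perm_graph_del k \<sigma>)"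
    by (rule wconn_sym)
  with True show ?thesis
    by simp
qed

lemma wconn_perm_graph_del:
  assumes "permutation \<sigma>"
  shows "wconn (perm_graph_del k \<sigma>) `` {x} = orbit \<sigma> x"
proof (intro set_eqI iffI)
  fix y
  assume "y \<in> wconn (perm_graph_del k \<sigma>) `` {x}"
  then have "(x, y) \<in> (perm_graph_del k \<sigma> \<union> (perm_graph_del k \<sigma>)\<inverse>)\<^sup>*"
    unfolding wconn_def by simp
  then show "y \<in> orbit \<sigma> x"
  proof (induction rule: rtrancl_induct)
    case base
    show ?case by (rule permutation_self_in_orbit[OF assms])
  next
    case (step y z)
    then consider "z = \<sigma> y" | "y = \<sigma> z"
      by (auto simp: perm_graph_del_iff)
    then show ?case
    proof cases
      case 1
      with step.IH show ?thesis by (simp add: orbit.step)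
    next
      case 2
      then have "z \<in> orbit \<sigma> y"
        using permutation_self_in_orbit[OF assms, of z] permutation_orbit_step[OF assms, of z] by simp
      with step.IH show ?thesis by (blast intro: orbit_trans)
    qed
  qed
next
  fix y
  assume "y \<in> orbit \<sigma> x"
  then obtain n where "y = (\<sigma> ^^ n) x"
    by (auto simp: orbit_altdef_permutation[OF assms])
  moreover have "(x, (\<sigma> ^^ n) x) \<in> wconn (perm_graph_del k \<sigma>)" for n
  proof (induction n)
    case (Suc n)
    show ?case
      using wconn_trans[OF Suc.IH wconn_perm_graph_del_step[OF assms]] by simp
  qed (simp add: wconn_def)
  ultimately show "y \<in> wconn (perm_graph_del k \<sigma>) `` {x}"
    by simp
qed

lemma components_perm_graph_del:
  assumes "permutation \<sigma>"
  shows "components (perm_graph_del k \<sigma>) = range (orbit \<sigma>)"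
  unfolding components_def wconn_perm_graph_del[OF assms] by auto

lemma last_support:
  assumes "permutation p"
  shows "last (support p (p x)) = x"
proof -
  let ?L = "least_power p (p x)"
  have "?L > 0"
    by (rule least_power_of_permutation(2)[OF assms])
  then have "(p ^^ Suc (?L - 1)) (p x) = p x"
    using least_power_of_permutation(1)[OF assms] by simp
  then have "p ((p ^^ (?L - 1)) (p x)) = p x"
    by simp
  then have "(p ^^ (?L - 1)) (p x) = x"
    by (rule injD[OF bij_is_inj[OF permutation_bijective[OF assms]]])
  with \<open>?L > 0\<close> show ?thesis
    by (simp add: last_map)
qed

lemma perm_graph_del_Int_orbit:
  assumes "permutation \<sigma>"
  shows "perm_graph_del k \<sigma> \<inter> orbit \<sigma> x \<times> orbit \<sigma> x =
    (\<lambda>v. (v, cycle_of_list (support \<sigma> x) v)) ` (orbit \<sigma> x - {k})"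
proof -
  have "perm_graph_del k \<sigma> \<inter> orbit \<sigma> x \<times> orbit \<sigma> x = (\<lambda>v. (v, \<sigma> v)) ` (orbit \<sigma> x - {k})"
    by (auto simp: perm_graph_del_iff orbit.step)
  also have "\<dots> = (\<lambda>v. (v, cycle_of_list (support \<sigma> x) v)) ` (orbit \<sigma> x - {k})"
    using cycle_restrict[OF assms] set_support_eq_orbit[OF assms] by (intro image_cong) auto
  finally show ?thesis .
qed

lemma is_dcycle_comp_perm_graph_del:
  assumes "permutation \<sigma>" "k \<notin> orbit \<sigma> x"
  shows "is_dcycle_comp (perm_graph_del k \<sigma>) (orbit \<sigma> x)"
  unfolding is_dcycle_comp_iff
proof (intro exI conjI)
  show "support \<sigma> x \<noteq> []" "distinct (support \<sigma> x)" "set (support \<sigma> x) = orbit \<sigma> x"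
    using least_power_of_permutation(2)[OF assms(1)] cycle_of_permutation[OF assms(1)]
      set_support_eq_orbit[OF assms(1)] by simp_all
  show "perm_graph_del k \<sigma> \<inter> orbit \<sigma> x \<times> orbit \<sigma> x =
      (\<lambda>v. (v, cycle_of_list (support \<sigma> x) v)) ` orbit \<sigma> x"
    using perm_graph_del_Int_orbit[OF assms(1)] assms(2) by simp
qed

lemma is_dpath_comp_perm_graph_del:
  assumes "permutation \<sigma>"
  shows "is_dpath_comp (perm_graph_del k \<sigma>) (orbit \<sigma> k)"
  unfolding is_dpath_comp_iff
proof (intro exI conjI)
  have orbit: "orbit \<sigma> (\<sigma> k) = orbit \<sigma> k"
    by (rule permutation_orbit_step[OF assms])
  show "support \<sigma> (\<sigma> k) \<noteq> []" "distinct (support \<sigma> (\<sigma> k))" "set (support \<sigma> (\<sigma> k)) = orbit \<sigma> k"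
    using least_power_of_permutation(2)[OF assms] cycle_of_permutation[OF assms]
      set_support_eq_orbit[OF assms] orbit by simp_all
  show "perm_graph_del k \<sigma> \<inter> orbit \<sigma> k \<times> orbit \<sigma> k =
      (\<lambda>v. (v, cycle_of_list (support \<sigma> (\<sigma> k)) v)) ` (orbit \<sigma> k - {last (support \<sigma> (\<sigma> k))})"
    using perm_graph_del_Int_orbit[OF assms, of k "\<sigma> k"] unfolding orbit last_support[OF assms] .
qed

lemma perm_graph_del_comp_cases:
  assumes "permutation \<sigma>" "S \<in> components (perm_graph_del k \<sigma>)"
  shows "is_dpath_comp (perm_graph_del k \<sigma>) S \<longleftrightarrow> S = orbit \<sigma> k"
    and "is_dcycle_comp (perm_graph_del k \<sigma>) S \<longleftrightarrow> S \<noteq> orbit \<sigma> k"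
proof -
  obtain x where S: "S = orbit \<sigma> x"
    using assms(2) components_perm_graph_del[OF assms(1)] by auto
  have cycle: "is_dcycle_comp (perm_graph_del k \<sigma>) S" if "S \<noteq> orbit \<sigma> k"
  proof -
    have "k \<notin> orbit \<sigma> x"
      using that orbit_eq_if_mem[OF assms(1)] unfolding S by blast
    then show ?thesis
      unfolding S by (rule is_dcycle_comp_perm_graph_del[OF assms(1)])
  qed
  have path: "is_dpath_comp (perm_graph_del k \<sigma>) S" if "S = orbit \<sigma> k"
    unfolding that by (rule is_dpath_comp_perm_graph_del[OF assms(1)])
  show "is_dpath_comp (perm_graph_del k \<sigma>) S \<longleftrightarrow> S = orbit \<sigma> k"
    and "is_dcycle_comp (perm_graph_del k \<sigma>) S \<longleftrightarrow> S \<noteq> orbit \<sigma> k"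
    using cycle path not_dpath_and_dcycle_comp by auto
qed

lemma perm_graph_del_in_path_cycle_graphs:
  assumes "permutation \<sigma>"
  shows "perm_graph_del k \<sigma> \<in> path_cycle_graphs"
  unfolding path_cycle_graphs_def
  using perm_graph_del_comp_cases[OF assms] components_perm_graph_del[OF assms]
  by (auto intro!: ex1I[of _ "orbit \<sigma> k"])

lemma num_cycles_perm_graph_del:
  assumes "permutation (\<sigma> :: 'v::finite \<Rightarrow> 'v)"
  shows "num_cycles (perm_graph_del k \<sigma>) + 1 = card (range (orbit \<sigma>))"
proof -
  have "{S \<in> components (perm_graph_del k \<sigma>). is_dcycle_comp (perm_graph_del k \<sigma>) S} =
      range (orbit \<sigma>) - {orbit \<sigma> k}"
    using perm_graph_del_comp_cases(2)[OF assms] components_perm_graph_del[OF assms] by auto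
  then show ?thesis
    unfolding num_cycles_def by (simp add: card_Diff_singleton card_gt_0_iff)
qed

lemma perm_graph_del_inj:
  assumes "bij \<sigma>" "bij \<sigma>'" "perm_graph_del k \<sigma> = perm_graph_del k' \<sigma>'"
  shows "k = k'" and "\<sigma> = \<sigma>'"
proof -
  have "fst ` perm_graph_del k \<sigma> = - {k}" for k and \<sigma> :: "'a \<Rightarrow> 'a"
    unfolding perm_graph_del_def by (simp add: image_image)
  then have "- {k} = - {k'}"
    using assms(3) by metis
  then show "k = k'"
    by simp
  then have agree: "\<sigma> i = \<sigma>' i" if "i \<noteq> k" for i
    using assms(3) that by (auto simp: set_eq_iff perm_graph_del_iff)
  obtain j where j: "\<sigma>' k = \<sigma> j"
    using assms(1) by (rule bij_pointE)
  have "\<sigma> k = \<sigma>' k"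
  proof (cases "j = k")
    case False
    then have "\<sigma>' j = \<sigma>' k"
      using agree j by simp
    then show ?thesis
      using bij_is_inj[OF assms(2)] False by (simp add: inj_eq)
  qed (use j in simp)
  with agree show "\<sigma> = \<sigma>'"
    by fastforce
qed

lemma wconn_class_in_components: "wconn E `` {x} \<in> components E"
  unfolding components_def by blast

lemma wconn_class_self: "x \<in> wconn E `` {x}"
  unfolding wconn_def by simp

lemma wconn_class_eq: "y \<in> wconn E `` {x} \<Longrightarrow> wconn E `` {y} = wconn E `` {x}"
  using equiv_class_eq[OF equiv_wconn, of x y] by simp

definition component_succ :: "('v \<times> 'v) set \<Rightarrow> ('v set \<Rightarrow> 'v list) \<Rightarrow> 'v \<Rightarrow> 'v" where
  "component_succ G vs x = cycle_of_list (vs (wconn G `` {x})) x"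

lemma bij_component_succ:
  assumes "\<forall>S\<in>components G. distinct (vs S) \<and> set (vs S) = S"
  shows "bij (component_succ G vs)"
proof (rule bijI)
  let ?c = "\<lambda>x. wconn G `` {x}"
  have permutes: "cycle_of_list (vs (?c x)) permutes ?c x" for x
    using cycle_permutes[of "vs (?c x)"] assms wconn_class_in_components[of G x] by simp
  have same_class: "?c (component_succ G vs x) = ?c x" for x
    unfolding component_succ_def
    by (rule wconn_class_eq[OF permutes_in_image[OF permutes, THEN iffD2, OF wconn_class_self]])
  show "inj (component_succ G vs)"
  proof (rule injI)
    fix x y
    assume eq: "component_succ G vs x = component_succ G vs y"
    then have "?c y = ?c x"
      using same_class[of x] same_class[of y] by simp
    with eq show "x = y"
      using permutes_inj[OF permutes[of x]] unfolding component_succ_def by (simp add: inj_eq)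
  qed
  have "y \<in> range (component_succ G vs)" for y
  proof -
    obtain x where "x \<in> ?c y" "cycle_of_list (vs (?c y)) x = y"
      using permutes_image[OF permutes[of y]] wconn_class_self[of y G] by (metis imageE)
    then have "component_succ G vs x = y"
      unfolding component_succ_def by (simp add: wconn_class_eq)
    then show ?thesis
      by (metis rangeI)
  qed
  then show "surj (component_succ G vs)"
    by blast
qed

lemma graph_eq_component_succ:
  assumes "\<forall>S\<in>components G. G \<inter> S \<times> S = (\<lambda>v. (v, cycle_of_list (vs S) v)) ` (S - D)"
  shows "G = (\<lambda>v. (v, component_succ G vs v)) ` (- D)"
proof -
  let ?c = "\<lambda>x. wconn G `` {x}"
  have edges: "G \<inter> ?c x \<times> ?c x = (\<lambda>v. (v, cycle_of_list (vs (?c x)) v)) ` (?c x - D)" for x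
    by (rule bspec[OF assms wconn_class_in_components])
  show ?thesis
  proof (intro set_eqI iffI)
    fix e
    assume "e \<in> G"
    then obtain a b where e: "e = (a, b)" "(a, b) \<in> G"
      by (cases e) auto
    then have "b \<in> ?c a"
      unfolding wconn_def by auto
    with e wconn_class_self[of a G] edges[of a]
    have "(a, b) \<in> (\<lambda>v. (v, cycle_of_list (vs (?c a)) v)) ` (?c a - D)"
      by blast
    then show "e \<in> (\<lambda>v. (v, component_succ G vs v)) ` (- D)"
      unfolding e component_succ_def by auto
  next
    fix e
    assume "e \<in> (\<lambda>v. (v, component_succ G vs v)) ` (- D)"
    then obtain a where e: "e = (a, component_succ G vs a)" and "a \<notin> D"
      by auto
    have "a \<in> ?c a - D"
      using wconn_class_self \<open>a \<notin> D\<close> by (rule DiffI)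
    then have "(a, cycle_of_list (vs (?c a)) a) \<in> G \<inter> ?c a \<times> ?c a"
      unfolding edges by (rule imageI)
    then show "e \<in> G"
      unfolding e component_succ_def by blast
  qed
qed

lemma path_cycle_graph_eq_perm_graph_del:
  assumes "G \<in> path_cycle_graphs"
  obtains k \<sigma> where "bij \<sigma>" "G = perm_graph_del k \<sigma>"
proof -
  have "\<exists>!P. P \<in> components G \<and> is_dpath_comp G P"
    and comps: "\<forall>S\<in>components G. is_dpath_comp G S \<or> is_dcycle_comp G S"
    using assms unfolding path_cycle_graphs_def by simp_all
  then obtain P where P: "P \<in> components G \<and> is_dpath_comp G P"
    and unique: "\<forall>S. S \<in> components G \<and> is_dpath_comp G S \<longrightarrow> S = P"
    by (elim ex1E)
  obtain ps where ps: "ps \<noteq> []" "distinct ps" "set ps = P"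
    "G \<inter> P \<times> P = (\<lambda>v. (v, cycle_of_list ps v)) ` (P - {last ps})"
    using P unfolding is_dpath_comp_iff by blast
  have "\<exists>vs. distinct vs \<and> set vs = S \<and> G \<inter> S \<times> S = (\<lambda>v. (v, cycle_of_list vs v)) ` (S - {last ps})"
    if S: "S \<in> components G" for S
  proof (cases "S = P")
    case True
    with ps show ?thesis by blast
  next
    case False
    then have "is_dcycle_comp G S"
      using comps unique S by blast
    moreover have "S \<inter> P = {}"
      using quotient_disj[OF equiv_wconn[of G]] S P False unfolding components_eq_quotient by auto
    then have "S - {last ps} = S"
      using last_in_set[OF ps(1)] ps(3) by blast
    ultimately show ?thesis
      unfolding is_dcycle_comp_iff by auto
  qed
  then have "\<forall>S\<in>components G. \<exists>vs. distinct vs \<and> set vs = S \<and>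
      G \<inter> S \<times> S = (\<lambda>v. (v, cycle_of_list vs v)) ` (S - {last ps})"
    by blast
  from bchoice[OF this] obtain vs where vs: "\<forall>S\<in>components G. distinct (vs S) \<and> set (vs S) = S \<and>
      G \<inter> S \<times> S = (\<lambda>v. (v, cycle_of_list (vs S) v)) ` (S - {last ps})"
    by blast
  have "bij (component_succ G vs)"
    by (rule bij_component_succ) (use vs in simp)
  moreover have "G = perm_graph_del (last ps) (component_succ G vs)"
    unfolding perm_graph_del_def by (rule graph_eq_component_succ) (use vs in simp)
  ultimately show ?thesis
    by (rule that)
qed

lemma bij_betw_perm_graph_del:
  "bij_betw (\<lambda>(k, \<sigma>). perm_graph_del k \<sigma>) (UNIV \<times> {\<sigma>. \<sigma> permutes (UNIV :: 'v::finite set)})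
    path_cycle_graphs"
proof (rule bij_betw_imageI)
  have permutation: "permutation \<sigma>" if "\<sigma> permutes (UNIV :: 'v set)" for \<sigma>
    using that finite[of UNIV] by (auto simp: permutation_permutes)
  show "inj_on (\<lambda>(k, \<sigma>). perm_graph_del k \<sigma>) (UNIV \<times> {\<sigma>. \<sigma> permutes (UNIV :: 'v set)})"
  proof (rule inj_onI, clarify)
    fix k k' :: 'v and \<sigma> \<sigma>'
    assume "\<sigma> permutes UNIV" "\<sigma>' permutes UNIV" "perm_graph_del k \<sigma> = perm_graph_del k' \<sigma>'"
    from perm_graph_del_inj[OF permutes_bij[OF this(1)] permutes_bij[OF this(2)] this(3)]
    show "k = k' \<and> \<sigma> = \<sigma>'" ..
  qed
  show "(\<lambda>(k, \<sigma>). perm_graph_del k \<sigma>) ` (UNIV \<times> {\<sigma>. \<sigma> permutes (UNIV :: 'v set)}) = path_cycle_graphs"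
  proof (intro equalityI subsetI)
    fix G :: "('v \<times> 'v) set"
    assume "G \<in> path_cycle_graphs"
    then obtain k \<sigma> where "bij \<sigma>" "G = perm_graph_del k \<sigma>"
      by (rule path_cycle_graph_eq_perm_graph_del)
    moreover have "\<sigma> permutes UNIV"
      using \<open>bij \<sigma>\<close> by (rule bij_imp_permutes) simp
    ultimately show "G \<in> (\<lambda>(k, \<sigma>). perm_graph_del k \<sigma>) ` (UNIV \<times> {\<sigma>. \<sigma> permutes UNIV})"
      by auto
  qed (auto intro: perm_graph_del_in_path_cycle_graphs permutation)
qed

lemma prod_perm_graph_del:
  "(\<Prod>(i, j) \<in> perm_graph_del k \<sigma>. f i j) = (\<Prod>i \<in> - {k}. f i (\<sigma> i))"
  unfolding perm_graph_del_def by (simp add: prod.reindex inj_on_convol_ident)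

lemma power_num_cycles_perm_graph_del:
  assumes "\<sigma> permutes (UNIV :: 'v::finite set)"
  shows "(-1 :: 'a::comm_ring_1) ^ num_cycles (perm_graph_del k \<sigma>) = of_int (sign \<sigma>) * (-1) ^ (CARD('v) - 1)"
proof -
  have perm: "permutation \<sigma>"
    using assms finite[of UNIV] by (auto simp: permutation_permutes)
  have "CARD('v) > 0"
    by simp
  then obtain n where n: "CARD('v) = Suc n"
    using gr0_implies_Suc by blast
  let ?m = "num_cycles (perm_graph_del k \<sigma>)"
  have orbits: "card (range (orbit \<sigma>)) = Suc ?m"
    using num_cycles_perm_graph_del[OF perm, of k] by simp
  have "sign \<sigma> * (-1) ^ Suc ?m = (-1) ^ Suc n"
    using sign_permutes_orbits[OF assms finite] by (simp only: orbits n)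
  then have "sign \<sigma> * (-1) ^ ?m = (-1) ^ n"
    by simp
  moreover have "sign \<sigma> * sign \<sigma> = 1"
    by (simp add: sign_def)
  ultimately have "(-1) ^ ?m = sign \<sigma> * (-1) ^ n"
    by (metis mult.assoc mult_1)
  then have "(of_int ((-1) ^ ?m) :: 'a) = of_int (sign \<sigma> * (-1) ^ n)"
    by (rule arg_cong)
  then show ?thesis
    unfolding n by simp
qed

section \<open>Multilinearity of the determinant\<close>

lemma det_cong_rows:
  assumes "\<And>i. f i = g i"
  shows "det (\<chi> i. f i) = det ((\<chi> i. g i) :: 'a::comm_ring_1^'n^'n)"
  using ext[of f g, OF assms] by simp

lemma det_add_vector_to_rows:
  fixes u :: "'a::comm_ring_1^'n" and v w :: "'n \<Rightarrow> 'a^'n"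
  shows "det (\<chi> i. if i \<in> T then u + v i else w i) =
    det (\<chi> i. if i \<in> T then v i else w i) +
    (\<Sum>k\<in>T. det (\<chi> i. if i = k then u else if i \<in> T then v i else w i))"
  using finite[of T]
proof (induction T arbitrary: w rule: finite_induct)
  case (insert a T w)
  define w1 where "w1 = w(a := u)"
  define w2 where "w2 = w(a := v a)"
  have "det (\<chi> i. if i \<in> insert a T then u + v i else w i) =
      det (\<chi> i. if i = a then u + v i else if i \<in> T then u + v i else w i)"
    by (rule det_cong_rows) simp
  also have "\<dots> = det (\<chi> i. if i = a then u else if i \<in> T then u + v i else w i) +
      det (\<chi> i. if i = a then v i else if i \<in> T then u + v i else w i)"
    by (rule det_row_add)
  also have "det (\<chi> i. if i = a then u else if i \<in> T then u + v i else w i) =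
      det (\<chi> i. if i \<in> T then u + v i else w1 i)"
    by (rule det_cong_rows) (use insert.hyps(2) in \<open>auto simp: w1_def\<close>)
  also have "\<dots> = det (\<chi> i. if i = a then u else if i \<in> insert a T then v i else w i)"
  proof -
    have "det (\<chi> i. if i = k then u else if i \<in> T then v i else w1 i) = 0" if "k \<in> T" for k
      using that insert.hyps(2)
      by (intro det_identical_rows[of k a]) (auto simp: row_def w1_def)
    moreover have "det (\<chi> i. if i \<in> T then v i else w1 i) =
        det (\<chi> i. if i = a then u else if i \<in> insert a T then v i else w i)"
      by (rule det_cong_rows) (use insert.hyps(2) in \<open>auto simp: w1_def\<close>)
    ultimately show ?thesis
      using insert.IH[of w1] by simp
  qed
  also have "det (\<chi> i. if i = a then v i else if i \<in> T then u + v i else w i) =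
      det (\<chi> i. if i \<in> T then u + v i else w2 i)"
    by (rule det_cong_rows) (use insert.hyps(2) in \<open>auto simp: w2_def\<close>)
  also have "\<dots> = det (\<chi> i. if i \<in> insert a T then v i else w i) +
      (\<Sum>k\<in>T. det (\<chi> i. if i = k then u else if i \<in> insert a T then v i else w i))"
  proof -
    have "det (\<chi> i. if i \<in> T then v i else w2 i) = det (\<chi> i. if i \<in> insert a T then v i else w i)"
      by (rule det_cong_rows) (auto simp: w2_def)
    moreover have "det (\<chi> i. if i = k then u else if i \<in> T then v i else w2 i) =
        det (\<chi> i. if i = k then u else if i \<in> insert a T then v i else w i)" for k
      by (rule det_cong_rows) (auto simp: w2_def)
    ultimately show ?thesis
      using insert.IH[of w2] by simp
  qed
  finally show ?case
    using insert.hyps by (simp add: add_ac)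
qed simp

lemma det_add_vector_to_all_rows:
  fixes u :: "'a::comm_ring_1^'n" and v :: "'n \<Rightarrow> 'a^'n"
  shows "det (\<chi> i. u + v i) = det (\<chi> i. v i) + (\<Sum>k\<in>UNIV. det (\<chi> i. if i = k then u else v i))"
  using det_add_vector_to_rows[of UNIV u v v] by (simp only: UNIV_I if_True)

lemma det_ones_row:
  fixes C :: "'a::comm_ring_1^'n^'n"
  shows "det (\<chi> i. if i = k then (\<chi> j. 1) else - C $ i) =
    (\<Sum>\<sigma> | \<sigma> permutes (UNIV :: 'n set).
       of_int (sign \<sigma>) * (-1) ^ (CARD('n) - 1) * (\<Prod>i \<in> - {k}. C $ i $ \<sigma> i))"
  unfolding det_def
proof (rule sum.cong[OF refl])
  fix \<sigma> :: "'n \<Rightarrow> 'n"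
  have "(\<Prod>i\<in>UNIV. (\<chi> i. if i = k then (\<chi> j. 1) else - C $ i) $ i $ \<sigma> i) =
      (\<Prod>i\<in>UNIV. if i = k then 1 else - C $ i $ \<sigma> i)"
    by (rule prod.cong) auto
  also have "\<dots> = (\<Prod>i \<in> - {k}. - C $ i $ \<sigma> i)"
    by (simp add: prod.If_cases Collect_neg_eq[symmetric])
  also have "\<dots> = (-1) ^ (CARD('n) - 1) * (\<Prod>i \<in> - {k}. C $ i $ \<sigma> i)"
    by (simp add: prod_uminus card_Diff_singleton Compl_eq_Diff_UNIV)
  finally show "of_int (sign \<sigma>) * (\<Prod>i\<in>UNIV. (\<chi> i. if i = k then (\<chi> j. 1) else - C $ i) $ i $ \<sigma> i) =
      of_int (sign \<sigma>) * (-1) ^ (CARD('n) - 1) * (\<Prod>i \<in> - {k}. C $ i $ \<sigma> i)"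
    by (simp add: mult.assoc)
qed

theorem corollaryA5:
  fixes C :: "'a::comm_ring_1 ^ 'n ^ 'n"
  shows "det ((\<chi> i j. 1) - C) =
    det (- C) + (\<Sum>G \<in> (path_cycle_graphs :: ('n \<times> 'n) set set).
       (-1) ^ num_cycles G * (\<Prod>(i, j) \<in> G. C $ i $ j))"
proof -
  let ?P = "{\<sigma>. \<sigma> permutes (UNIV :: 'n set)}"
  have "(\<chi> i j. 1) - C = (\<chi> i. (\<chi> j. 1) + - C $ i)" and "- C = (\<chi> i. - C $ i)"
    by (simp_all add: vec_eq_iff)
  then have "det ((\<chi> i j. 1) - C) =
      det (- C) + (\<Sum>k\<in>UNIV. det (\<chi> i. if i = k then (\<chi> j. 1) else - C $ i))"
    by (simp only: det_add_vector_to_all_rows)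
  also have "(\<Sum>k\<in>UNIV. det (\<chi> i. if i = k then (\<chi> j. 1) else - C $ i)) =
      (\<Sum>(k, \<sigma>) \<in> UNIV \<times> ?P. of_int (sign \<sigma>) * (-1) ^ (CARD('n) - 1) * (\<Prod>i \<in> - {k}. C $ i $ \<sigma> i))"
    unfolding det_ones_row by (rule sum.cartesian_product)
  also have "\<dots> = (\<Sum>(k, \<sigma>) \<in> UNIV \<times> ?P.
      (-1) ^ num_cycles (perm_graph_del k \<sigma>) * (\<Prod>(i, j) \<in> perm_graph_del k \<sigma>. C $ i $ j))"
    by (intro sum.cong refl) (auto simp: power_num_cycles_perm_graph_del prod_perm_graph_del)
  also have "\<dots> = (\<Sum>G \<in> path_cycle_graphs. (-1) ^ num_cycles G * (\<Prod>(i, j) \<in> G. C $ i $ j))"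
    using sum.reindex_bij_betw[OF bij_betw_perm_graph_del] by (simp add: case_prod_beta')
  finally show ?thesis .
qed

end
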